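(* Let $\mathcal N=\{N_1,\ldots,N_\ell\}$ ($\ell\ge4$) be a family of $k$-sets satisfying properties (i) and (ii) below, and fix any run of the decomposition process described in the context. Let $0\le j\le t$, $1\le i\le\ell_j$, and $Y\subseteq N_i$ with $|Y|\le j$. Then there exists a private pair $p\subseteq N_i\setminus Y$ for $N_i$ at time $j$ such that either $p$ is a subset of some $3$-element set $C\subseteq\bigl(N_i\cup\{a_i^{(0)},\dots,a_i^{(j)}\}\bigr)\setminus Y$ satisfying $C\cap(V\setminus N_r)\neq\varnothing$ for all $r=1,\dots,\ell$, or $p$ contains a vertex that is private for $N_i$ at time $j$.
   Context: Setting: $k\ge3$, $\mathcal N=\{N_1,\dots,N_\ell\}$ a family of $k$-subsets, $V=\bigcup N_i$, $n=|V|$, $m=n-k$, satisfying (i) $\bigcap_{i}N_i=\varnothing$ but $\bigcap_{j\ne i}N_j\ne\varnothing$ for all $i$; (ii) every $S\subseteq V$ with $|S|\ge k+1$ contains a $3$-set $T$ not contained in any $N_i$. Assume $\ell\ge4$. Decomposition process: Stage $0$: $\ell_0=\ell$; for each $i\le\ell_0$ choose $a_i^{(0)}\in\bigcap_{r\ne i}N_r$; kernel $A^{(0)}=\{a_1^{(0)},\dots,a_{\ell_0}^{(0)}\}$. Having defined stages $0,\dots,j$ (with surviving sets $N_1,\dots,N_{\ell_j}$, $\ell_j\ge4$, and kernels $A^{(0)},\dots,A^{(j)}$), consider $R^{(j)}=\{N_r\setminus\bigcup_{s\le j}A^{(s)} : r\le\ell_j\}$, which has empty intersection. If every subfamily of $R^{(j)}$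 minimal with respect to having empty intersection has only $2$ or $3$ members, stop and set $t=j$. Otherwise choose such a minimal subfamily with at least $4$ members; after reindexing assume it consists of the truncations $N_r^{(j+1)}=N_r\setminus\bigcup_{s\le j}A^{(s)}$, $r\le\ell_{j+1}$; choose $a_i^{(j+1)}\in\bigcap_{r\le\ell_{j+1},r\ne i}N_r^{(j+1)}$ for $i\le\ell_{j+1}$, and let $A^{(j+1)}$ be the set of these. Privacy: for $i\le\ell_j$, a vertex $v\in N_i$ is private for $N_i$ at time $j$ if no $N_r$ with $r\le\ell_j$, $r\ne i$, contains $v$; a $2$-set $p\subseteq N_i$ is a private pair for $N_i$ at time $j$ if no $N_r$ with $r\le\ell_j$, $r\neq i$, contains $p$. *)

theory Defs
  imports Main
begin

text \<open>A run of the
decomposition process is encoded without reindexing: I j is the set of (original)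
indices of the sets surviving at stage j (so l_j = card (I j)), and a j i is the
kernel vertex a_i^(j) chosen for the set N i at stage j (i in I j).\<close>

definition kernel :: "(nat \<Rightarrow> nat set) \<Rightarrow> (nat \<Rightarrow> nat \<Rightarrow> 'a) \<Rightarrow> nat \<Rightarrow> 'a set" where
  "kernel I a s = a s ` I s"

definition trunc :: "(nat \<Rightarrow> 'a set) \<Rightarrow> (nat \<Rightarrow> nat set) \<Rightarrow> (nat \<Rightarrow> nat \<Rightarrow> 'a) \<Rightarrow> nat \<Rightarrow> nat \<Rightarrow> 'a set" where
  "trunc N I a j r = N r - (\<Union>s\<le>j. kernel I a s)"

definition min_empty_subfam :: "(nat \<Rightarrow> 'a set) \<Rightarrow> nat set \<Rightarrow> nat set \<Rightarrow> bool" where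
  "min_empty_subfam F I J \<longleftrightarrow> J \<subseteq> I \<and> J \<noteq> {} \<and> \<Inter>(F ` J) = {} \<and>
      (\<forall>i\<in>J. \<Inter>(F ` (J - {i})) \<noteq> {})"

definition decomp_run ::
  "(nat \<Rightarrow> 'a set) \<Rightarrow> nat \<Rightarrow> (nat \<Rightarrow> nat set) \<Rightarrow> (nat \<Rightarrow> nat \<Rightarrow> 'a) \<Rightarrow> nat \<Rightarrow> bool" where
  "decomp_run N l I a t \<longleftrightarrow>
     I 0 = {1..l} \<and>
     (\<forall>i\<in>I 0. a 0 i \<in> \<Inter>(N ` (I 0 - {i}))) \<and>
     (\<forall>j<t. min_empty_subfam (trunc N I a j) (I j) (I (Suc j)) \<and> card (I (Suc j)) \<ge> 4 \<and>
        (\<forall>i\<in>I (Suc j). a (Suc j) i \<in> \<Inter>(trunc N I a j ` (I (Suc j) - {i})))) \<and>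
     (\<forall>J. min_empty_subfam (trunc N I a t) (I t) J \<longrightarrow> card J = 2 \<or> card J = 3)"

definition private_vertex :: "(nat \<Rightarrow> 'a set) \<Rightarrow> (nat \<Rightarrow> nat set) \<Rightarrow> nat \<Rightarrow> nat \<Rightarrow> 'a \<Rightarrow> bool" where
  "private_vertex N I j i v \<longleftrightarrow> v \<in> N i \<and> (\<forall>r\<in>I j - {i}. v \<notin> N r)"

definition private_pair :: "(nat \<Rightarrow> 'a set) \<Rightarrow> (nat \<Rightarrow> nat set) \<Rightarrow> nat \<Rightarrow> nat \<Rightarrow> 'a set \<Rightarrow> bool" where
  "private_pair N I j i p \<longleftrightarrow> card p = 2 \<and> p \<subseteq> N i \<and> (\<forall>r\<in>I j - {i}. \<not> p \<subseteq> N r)"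

end

theory Submission
  imports Defs
begin

text \<open>The kernel vertices a_i^(0), ..., a_i^(j) are j + 1 distinct vertices outside N_i that
lie in every other surviving set.  Adding them to N_i - Y yields a set of at least k + 1 vertices,
so property (ii) provides a triple T in it lying in no N_r.  T meets N_i - Y in some x.  If x is
private, pair it with any non-private vertex of N_i - Y; one exists because, for surviving r0 and r
other than i, the j + 1 vertices a_r0^(s) lie in N_i and in N_r, and |Y| <= j.  Otherwise x lies
in some other N_r; a vertex y of T outside N_r is then no kernel vertex, hence lies in N_i - Y, and
since T is no subset of N_i its third vertex is a kernel vertex, which lies in every other surviving
set.  So no other surviving set contains {x, y}, and T is the required triple C.\<close>

lemma card_Diff_Un_disjoint:
  assumes "finite X" "finite A" "Y \<subseteq> X" "A \<inter> X = {}"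
  shows "card ((X - Y) \<union> A) = card X - card Y + card A"
proof -
  have "finite Y" using assms(1,3) by (rule finite_subset[rotated])
  then have "card (X - Y) = card X - card Y" using assms(3) by (rule card_Diff_subset)
  moreover have "card ((X - Y) \<union> A) = card (X - Y) + card A"
    using assms by (intro card_Un_disjoint) auto
  ultimately show ?thesis by simp
qed

lemma private_pair_insert_private_vertex:
  assumes "private_vertex N I j i x" "w \<in> N i" "w \<noteq> x"
  shows "private_pair N I j i {x, w}"
  using assms unfolding private_vertex_def private_pair_def by auto

lemma obtain_notin_of_card_less:
  assumes "finite F" "card F < card X"
  obtains x where "x \<in> X" "x \<notin> F"
  using assms by (metis card_mono not_le subsetI)

lemma private_pair_in_uncovered_triple:
  assumes T: "T \<subseteq> (N i - Y) \<union> A" "card T = 3"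
    and uncovered: "\<And>r. r \<in> {1..l} \<Longrightarrow> \<not> T \<subseteq> N r"
    and Ij: "I j \<subseteq> {1..l}" "i \<in> I j"
    and common: "\<And>r. r \<in> I j - {i} \<Longrightarrow> A \<subseteq> N r"
    and x: "x \<in> T" "x \<in> N i" "x \<in> N r" "r \<in> I j - {i}"
  obtains y where "y \<in> T" "y \<in> N i - Y" "private_pair N I j i {x, y}"
proof -
  obtain y where y: "y \<in> T" "y \<notin> N r" using uncovered[of r] x(4) Ij(1) by blast
  then have y_Ni: "y \<in> N i - Y" using T(1) common[OF x(4)] by blast
  obtain c where c: "c \<in> T" "c \<notin> N i" using uncovered[of i] Ij by blast
  then have "c \<in> A" using T(1) by blast
  have "x \<noteq> y" "c \<noteq> x" "c \<noteq> y" using x y y_Ni c by blast+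
  then have "card {x, y, c} = 3" by simp
  moreover have "{x, y, c} \<subseteq> T" using x y c by blast
  ultimately have T_eq: "T = {x, y, c}"
    using T(2) by (metis card_subset_eq card.infinite zero_neq_numeral)
  have "private_pair N I j i {x, y}"
    unfolding private_pair_def
  proof (intro conjI ballI)
    show "card {x, y} = 2" using \<open>x \<noteq> y\<close> by simp
    show "{x, y} \<subseteq> N i" using x y_Ni by blast
    show "\<not> {x, y} \<subseteq> N r'" if "r' \<in> I j - {i}" for r'
      using common[OF that] \<open>c \<in> A\<close> uncovered[of r'] that Ij(1) unfolding T_eq by blast
  qed
  with y(1) y_Ni show thesis by (rule that)
qed

lemma private_pair_from_common_vertices:
  fixes N :: "nat \<Rightarrow> 'a set" and A V Y :: "'a set"
  assumes Ni: "finite (N i)" "card (N i) = k" "N i \<subseteq> V"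
    and prop_ii: "\<forall>S. S \<subseteq> V \<and> card S \<ge> k + 1 \<longrightarrow>
                    (\<exists>T\<subseteq>S. card T = 3 \<and> (\<forall>r\<in>{1..l}. \<not> T \<subseteq> N r))"
    and Ij: "I j \<subseteq> {1..l}" "i \<in> I j" "r0 \<in> I j - {i}"
    and A: "finite A" "card A = Suc j" "A \<subseteq> V" "A \<inter> N i = {}"
      "\<And>r. r \<in> I j - {i} \<Longrightarrow> A \<subseteq> N r"
    and Y: "Y \<subseteq> N i" "card Y \<le> j"
    and nonprivate: "w \<in> N i - Y" "r1 \<in> I j - {i}" "w \<in> N r1"
  shows "\<exists>p. private_pair N I j i p \<and> p \<subseteq> N i - Y \<and>
           ((\<exists>C. card C = 3 \<and> p \<subseteq> C \<and> C \<subseteq> (N i \<union> A) - Y \<and>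
                 (\<forall>r\<in>{1..l}. C \<inter> (V - N r) \<noteq> {}))
            \<or> (\<exists>v\<in>p. private_vertex N I j i v))"
proof -
  have "card ((N i - Y) \<union> A) = k - card Y + Suc j"
    using card_Diff_Un_disjoint[of "N i" A Y] Ni A Y by (simp add: Int_commute)
  then have "k + 1 \<le> card ((N i - Y) \<union> A)" using Y(2) by linarith
  moreover have "(N i - Y) \<union> A \<subseteq> V" using Ni(3) A(3) by blast
  ultimately obtain T where T: "T \<subseteq> (N i - Y) \<union> A" "card T = 3"
      and uncovered: "\<And>r. r \<in> {1..l} \<Longrightarrow> \<not> T \<subseteq> N r"
    using prop_ii[rule_format, of "(N i - Y) \<union> A"] by blast
  have "\<not> T \<subseteq> A" using uncovered[of r0] A(5)[of r0] Ij by blast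
  then obtain x where x: "x \<in> T" "x \<in> N i - Y" using T(1) by blast
  show ?thesis
  proof (cases "private_vertex N I j i x")
    case True
    then have "w \<noteq> x" using nonprivate unfolding private_vertex_def by blast
    then have "private_pair N I j i {x, w}"
      using private_pair_insert_private_vertex[OF True] nonprivate(1) by blast
    moreover have "{x, w} \<subseteq> N i - Y" using x nonprivate(1) by blast
    ultimately show ?thesis using True by (intro exI[of _ "{x, w}"]) blast
  next
    case False
    then obtain r where "r \<in> I j - {i}" "x \<in> N r"
      using x unfolding private_vertex_def by blast
    then obtain y where "y \<in> T" "y \<in> N i - Y" "private_pair N I j i {x, y}"
      using private_pair_in_uncovered_triple[where N = N and i = i and I = I and j = j,
          OF T uncovered Ij(1,2) A(5) x(1)] x(2) by blast
    moreover have "T \<subseteq> (N i \<union> A) - Y" using T(1) Y(1) A(4) by blast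
    moreover have "T \<inter> (V - N r) \<noteq> {}" if "r \<in> {1..l}" for r
      using uncovered[OF that] T(1) Ni(3) A(3) by blast
    ultimately show ?thesis using T(2) x by (intro exI[of _ "{x, y}"]) blast
  qed
qed

definition kernel_column :: "(nat \<Rightarrow> nat \<Rightarrow> 'a) \<Rightarrow> nat \<Rightarrow> nat \<Rightarrow> 'a set" where
  "kernel_column a j i = {a s i | s. s \<le> j}"

lemma kernel_column_eq_image: "kernel_column a j i = (\<lambda>s. a s i) ` {..j}"
  unfolding kernel_column_def by auto

context
  fixes N :: "nat \<Rightarrow> 'a set" and l t :: nat and I :: "nat \<Rightarrow> nat set" and a :: "nat \<Rightarrow> nat \<Rightarrow> 'a"
  assumes run: "decomp_run N l I a t"
begin

lemma decomp_run_stage_antimono: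
  assumes "s \<le> j" "j \<le> t"
  shows "I j \<subseteq> I s"
  using assms
proof (induction j rule: dec_induct)
  case base
  then show ?case by simp
next
  case (step n)
  then have "I (Suc n) \<subseteq> I n"
    using run unfolding decomp_run_def min_empty_subfam_def by auto
  with step show ?case by simp
qed

lemma decomp_run_stage_subset: "s \<le> t \<Longrightarrow> I s \<subseteq> {1..l}"
  using decomp_run_stage_antimono[of 0 s] run unfolding decomp_run_def by auto

lemma decomp_run_stage_card: "4 \<le> l \<Longrightarrow> s \<le> t \<Longrightarrow> 4 \<le> card (I s)"
  using run by (cases s) (auto simp: decomp_run_def)

lemma decomp_run_kernel_in_trunc:
  assumes "s < t" "i \<in> I (Suc s)" "r \<in> I (Suc s) - {i}"
  shows "a (Suc s) i \<in> trunc N I a s r"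
  using run assms unfolding decomp_run_def by blast

lemma decomp_run_kernel_in_others:
  assumes "s \<le> t" "i \<in> I s" "r \<in> I s - {i}"
  shows "a s i \<in> N r"
proof (cases s)
  case 0
  then show ?thesis using run assms unfolding decomp_run_def by auto
next
  case (Suc s')
  then show ?thesis
    using decomp_run_kernel_in_trunc[of s' i r] assms unfolding trunc_def by auto
qed

lemma decomp_run_kernel_fresh:
  assumes "s \<le> t" "i \<in> I s" "r \<in> I s - {i}" "s' < s"
  shows "a s i \<notin> kernel I a s'"
proof -
  obtain s0 where "s = Suc s0" using assms(4) by (cases s) auto
  with assms show ?thesis
    using decomp_run_kernel_in_trunc[of s0 i r] unfolding trunc_def by auto
qed

lemma decomp_run_other_index:
  assumes "4 \<le> l" "s \<le> t" "i \<in> I s"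
  obtains r where "r \<in> I s - {i}"
  using obtain_notin_of_card_less[of "{i}" "I s"] decomp_run_stage_card[OF assms(1,2)] by auto

lemma decomp_run_kernel_notin_own:
  assumes l4: "4 \<le> l" and empty_Inter: "(\<Inter>r\<in>{1..l}. N r) = {}"
    and s: "s \<le> t" and i: "i \<in> I s"
  shows "a s i \<notin> N i"
proof
  assume own: "a s i \<in> N i"
  show False
  proof (cases s)
    case 0
    have "I 0 = {1..l}" using run unfolding decomp_run_def by simp
    with 0 own i have "a s i \<in> (\<Inter>r\<in>{1..l}. N r)"
      using decomp_run_kernel_in_others[OF s i] by blast
    with empty_Inter show False by blast
  next
    case (Suc s0)
    obtain r where r: "r \<in> I s - {i}" using decomp_run_other_index[OF l4 s i] .
    have "a s i \<notin> kernel I a s'" if "s' \<le> s0" for s'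
      using decomp_run_kernel_fresh[OF s i r] that Suc by simp
    with own have "a s i \<in> trunc N I a s0 i" unfolding trunc_def by blast
    moreover have "a s i \<in> trunc N I a s0 r'" if "r' \<in> I s - {i}" for r'
      using decomp_run_kernel_in_trunc[of s0 i r'] that s i Suc by simp
    ultimately have "a s i \<in> \<Inter>(trunc N I a s0 ` I s)" by blast
    moreover have "\<Inter>(trunc N I a s0 ` I s) = {}"
      using run s Suc unfolding decomp_run_def min_empty_subfam_def by auto
    ultimately show False by blast
  qed
qed

lemma decomp_run_kernel_column_card:
  assumes l4: "4 \<le> l" and j: "j \<le> t" and i: "i \<in> I j"
  shows "card (kernel_column a j i) = Suc j"
proof -
  have "a s i \<noteq> a s' i" if "s < s'" "s' \<le> j" for s s'
  proof -
    have "i \<in> I s'" "i \<in> I s"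
      using decomp_run_stage_antimono[of s' j] decomp_run_stage_antimono[of s j] that j i by auto
    moreover have "s' \<le> t" using that j by simp
    ultimately obtain r where "r \<in> I s' - {i}" using decomp_run_other_index[OF l4] by blast
    then have "a s' i \<notin> kernel I a s"
      using decomp_run_kernel_fresh \<open>s' \<le> t\<close> \<open>i \<in> I s'\<close> that by blast
    moreover have "a s i \<in> kernel I a s" using \<open>i \<in> I s\<close> unfolding kernel_def by simp
    ultimately show ?thesis by metis
  qed
  then have "inj_on (\<lambda>s. a s i) {..j}"
    by (intro inj_onI) (metis atMost_iff linorder_neqE_nat)
  then show ?thesis unfolding kernel_column_eq_image by (simp add: card_image)
qed

lemma decomp_run_kernel_column_subset:
  assumes "j \<le> t" "i \<in> I j" "r \<in> I j - {i}"
  shows "kernel_column a j i \<subseteq> N r"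
proof
  fix v assume "v \<in> kernel_column a j i"
  then obtain s where "s \<le> j" "v = a s i" unfolding kernel_column_def by blast
  moreover have "I j \<subseteq> I s" using decomp_run_stage_antimono \<open>s \<le> j\<close> assms(1) .
  ultimately show "v \<in> N r" using decomp_run_kernel_in_others[of s i r] assms by auto
qed

lemma decomp_run_kernel_column_disjoint:
  assumes "4 \<le> l" "(\<Inter>r\<in>{1..l}. N r) = {}" "j \<le> t" "i \<in> I j"
  shows "kernel_column a j i \<inter> N i = {}"
proof -
  have "a s i \<notin> N i" if "s \<le> j" for s
    using decomp_run_kernel_notin_own[OF assms(1,2), of s i] decomp_run_stage_antimono[of s j]
      that assms(3,4) by auto
  then show ?thesis unfolding kernel_column_def by blast
qed

lemma decomp_run_nonprivate_vertex:
  assumes l4: "4 \<le> l" and j: "j \<le> t" and i: "i \<in> I j"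
    and Y: "finite Y" "card Y \<le> j"
  obtains w r where "w \<in> N i - Y" "r \<in> I j - {i}" "w \<in> N r"
proof -
  obtain r0 where r0: "r0 \<in> I j - {i}" using decomp_run_other_index[OF l4 j i] .
  have "card {i, r0} < card (I j)"
    using decomp_run_stage_card[OF l4 j] by (simp add: card_insert_if)
  then obtain r where r: "r \<in> I j - {i, r0}"
    using obtain_notin_of_card_less[of "{i, r0}" "I j"] by auto
  have "kernel_column a j r0 \<subseteq> N i \<inter> N r"
    using decomp_run_kernel_column_subset[OF j] r0 r i by blast
  moreover have "card Y < card (kernel_column a j r0)"
    using decomp_run_kernel_column_card[OF l4 j] r0 Y by simp
  then obtain w where "w \<in> kernel_column a j r0" "w \<notin> Y"
    using obtain_notin_of_card_less[OF Y(1)] by blast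
  ultimately show thesis using that[of w r] r by blast
qed

end

theorem lemma5:
  fixes N :: "nat \<Rightarrow> 'a set" and k l t j i :: nat and V Y :: "'a set"
    and I :: "nat \<Rightarrow> nat set" and a :: "nat \<Rightarrow> nat \<Rightarrow> 'a"
  assumes k3: "k \<ge> 3" and l4: "l \<ge> 4"
    and ksets: "\<forall>r\<in>{1..l}. finite (N r) \<and> card (N r) = k"
    and V_def: "V = (\<Union>r\<in>{1..l}. N r)"
    and prop_i1: "(\<Inter>r\<in>{1..l}. N r) = {}"
    and prop_i2: "\<forall>i'\<in>{1..l}. (\<Inter>r\<in>{1..l} - {i'}. N r) \<noteq> {}"
    and prop_ii: "\<forall>S. S \<subseteq> V \<and> card S \<ge> k + 1 \<longrightarrow>
                    (\<exists>T\<subseteq>S. card T = 3 \<and> (\<forall>r\<in>{1..l}. \<not> T \<subseteq> N r))"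
    and run: "decomp_run N l I a t"
    and jt: "j \<le> t" and iI: "i \<in> I j"
    and YN: "Y \<subseteq> N i" and Ycard: "card Y \<le> j"
  shows "\<exists>p. private_pair N I j i p \<and> p \<subseteq> N i - Y \<and>
           ((\<exists>C. card C = 3 \<and> p \<subseteq> C \<and> C \<subseteq> (N i \<union> {a s i | s. s \<le> j}) - Y \<and>
                 (\<forall>r\<in>{1..l}. C \<inter> (V - N r) \<noteq> {}))
            \<or> (\<exists>v\<in>p. private_vertex N I j i v))"
proof -
  have Ij: "I j \<subseteq> {1..l}" using decomp_run_stage_subset[OF run jt] .
  with iI ksets V_def have Ni: "finite (N i)" "card (N i) = k" "N i \<subseteq> V" by auto
  obtain r0 where r0: "r0 \<in> I j - {i}" using decomp_run_other_index[OF run l4 jt iI] .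
  have "finite Y" using Ni(1) YN by (rule finite_subset[rotated])
  then obtain w r1 where nonprivate: "w \<in> N i - Y" "r1 \<in> I j - {i}" "w \<in> N r1"
    using decomp_run_nonprivate_vertex[OF run l4 jt iI _ Ycard] by blast
  define A where "A = kernel_column a j i"
  have A_card: "card A = Suc j"
    unfolding A_def using decomp_run_kernel_column_card[OF run l4 jt iI] .
  then have A_finite: "finite A" by (simp add: card_ge_0_finite)
  have A_common: "A \<subseteq> N r" if "r \<in> I j - {i}" for r
    unfolding A_def using decomp_run_kernel_column_subset[OF run jt iI that] .
  have A_V: "A \<subseteq> V" using A_common[OF r0] r0 Ij V_def by blast
  have A_disjoint: "A \<inter> N i = {}"
    unfolding A_def using decomp_run_kernel_column_disjoint[OF run l4 prop_i1 jt iI] .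
  show ?thesis
    using private_pair_from_common_vertices[where N = N and i = i and I = I and j = j, OF Ni prop_ii Ij iI r0 A_finite A_card A_V A_disjoint
        A_common YN Ycard nonprivate]
    unfolding A_def kernel_column_def .
qed

end
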